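(* Let $\gamma>0$, let $b_1,b_2,d_1,d_2,d_3$ be constants with $b_1+b_2=1$ and $d_1+d_2+d_3=1$, and let $A,B,C,k,p$ be $C^\infty$ functions on a neighbourhood of $(x_m,z_n)$. Then $$\tilde{\mathcal{L}}(p)_{m,n}+\tilde I(k^2Cp)_{m,n}=\Big[\frac{\partial}{\partial x}\Big(A\frac{\partial p}{\partial x}\Big)+\frac{\partial}{\partial z}\Big(B\frac{\partial p}{\partial z}\Big)+Ck^2p\Big](x_m,z_n)+O(h^4)\qquad(h\to0).$$ In particular the optimal point-weighting 17-point scheme $\tilde{\mathcal{L}}(p)_{m,n}+\tilde I(k^2Cp)_{m,n}=\tilde g_{m,n}$ is pointwise consistent with the Helmholtz–PML equation $\partial_x(A\partial_xp)+\partial_z(B\partial_zp)+Ck^2p=\tilde g$ and is of fourth order, for arbitrary values of the parameters subject to the two sum constraints.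
   Context: Grid: $\Delta x=h$, $\Delta z=\gamma h$, $x_{m+i}=x_m+ih$, $z_{n+j}=z_n+j\gamma h$, $p_{i,j}=p(x_i,z_j)$; for a function $F$, $F_{m+\frac{j}{2},n}=F(x_m+\tfrac j2h,z_n)$, $F_{m,n+\frac l2}=F(x_m,z_n+\tfrac l2\gamma h)$. The operator $\mathcal{L}_x$ acting on five values $(u_{m-2,n},\dots,u_{m+2,n})$: $\mathcal{L}_x[u]_{m,n}=h^{-2}\big[-\tfrac98A_{m-\frac12,n}(\tfrac1{24}u_{m-2,n}-\tfrac98u_{m-1,n}+\tfrac98u_{m,n}-\tfrac1{24}u_{m+1,n})+\tfrac1{24}A_{m-\frac32,n}(-\tfrac{11}{12}u_{m-2,n}+\tfrac{17}{24}u_{m-1,n}+\tfrac38u_{m,n}-\tfrac5{24}u_{m+1,n}+\tfrac1{24}u_{m+2,n})-\tfrac1{24}A_{m+\frac32,n}(-\tfrac1{24}u_{m-2,n}+\tfrac5{24}u_{m-1,n}-\tfrac38u_{m,n}-\tfrac{17}{24}u_{m+1,n}+\tfrac{11}{12}u_{m+2,n})+\tfrac98A_{m+\frac12,n}(\tfrac1{24}u_{m-1,n}-\tfrac98u_{m,n}+\tfrac98u_{m+1,n}-\tfrac1{24}u_{m+2,n})\big]$; $\mathcal{L}_z[u]_{m,n}$ is the same formula with $h^{-2}\to(\gamma h)^{-2}$, $A\to B$ with half-shifts in the second index, and $u_{m+i,n}\to u_{m,n+i}$. Point-weighted values: $\hat p_{m,n}=\tilde p_{m,n}=b_1p_{m,n}$,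 and for $i\in\{\pm1,\pm2\}$, with $s=|i|$: $\hat p_{m+i,n}=b_1p_{m+i,n}+\tfrac{b_2}{2}(p_{m+i,n+s}+p_{m+i,n-s}-p_{m,n+s}-p_{m,n-s})$, $\tilde p_{m,n+i}=b_1p_{m,n+i}+\tfrac{b_2}{2}(p_{m+s,n+i}+p_{m-s,n+i}-p_{m+s,n}-p_{m-s,n})$. Then $\tilde{\mathcal{L}}(p)_{m,n}=\mathcal{L}_x[\hat p]_{m,n}+\mathcal{L}_z[\tilde p]_{m,n}$ (i.e. $u_{m+i,n}=\hat p_{m+i,n}$ in $\mathcal{L}_x$ and $u_{m,n+i}=\tilde p_{m,n+i}$ in $\mathcal{L}_z$). With $Q_{i,j}=k^2(x_i,z_j)C(x_i,z_j)p_{i,j}$: $I^{(2)}(Q)_{m,n}=\tfrac13(Q_{m\pm1,n}+Q_{m,n\pm1})-\tfrac1{12}(Q_{m\pm2,n}+Q_{m,n\pm2})$ (sums over both signs), $I^{(3)}(Q)_{m,n}=\tfrac13(Q_{m-1,n-1}+Q_{m+1,n+1}+Q_{m-1,n+1}+Q_{m+1,n-1})-\tfrac1{12}(Q_{m-2,n-2}+Q_{m+2,n+2}+Q_{m-2,n+2}+Q_{m+2,n-2})$, and $\tilde I(Q)_{m,n}=d_1Q_{m,n}+d_2I^{(2)}(Q)_{m,n}+d_3I^{(3)}(Q)_{m,n}$. Here $\tilde g_{m,n}=\tilde g(x_m,z_n)$. Pointwise consistency means: for every smooth $\varphi$, the difference between the PDE residual at $(x_m,z_n)$ and the scheme residual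 tends to $0$ as $h\to0$. *)

theory Defs
  imports "HOL-Analysis.Analysis" "HOL-Library.Landau_Symbols"
begin

text \<open>C-infinity on an open set U of the plane, for complex-valued functions of two real
  variables, written out through partial derivatives: there is a family D i j (playing the
  role of the mixed partial of order i in x and j in z) with D 0 0 = f on U, every D i j
  continuous on U, and D (i+1) j resp. D i (j+1) the partial derivative of D i j in x
  resp. z at every point of U.\<close>
definition smooth2_on :: "(real \<times> real) set \<Rightarrow> (real \<times> real \<Rightarrow> complex) \<Rightarrow> bool" where
  "smooth2_on U f \<longleftrightarrow> (\<exists>D :: nat \<Rightarrow> nat \<Rightarrow> real \<times> real \<Rightarrow> complex.
      (\<forall>y\<in>U. D 0 0 y = f y) \<and>
      (\<forall>i j. continuous_on U (D i j)) \<and>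
      (\<forall>i j x z. (x, z) \<in> U \<longrightarrow>
         ((\<lambda>t. D i j (t, z)) has_vector_derivative D (Suc i) j (x, z)) (at x) \<and>
         ((\<lambda>t. D i j (x, t)) has_vector_derivative D i (Suc j) (x, z)) (at z)))"

text \<open>Grid values p_{m+i,n+j} with (x_m,z_n) = (x0,z0), dx = h, dz = gamma h.\<close>
definition gv :: "(real \<times> real \<Rightarrow> complex) \<Rightarrow> real \<Rightarrow> real \<Rightarrow> real \<Rightarrow> real \<Rightarrow> int \<Rightarrow> int \<Rightarrow> complex" where
  "gv P x0 z0 \<gamma> h i j = P (x0 + real_of_int i * h, z0 + real_of_int j * \<gamma> * h)"

text \<open>The bracket of the five-point operator, with coefficient values at the half points
  -3/2, -1/2, +1/2, +3/2 and the five values u(-2..2).\<close>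
definition L5 :: "complex \<Rightarrow> complex \<Rightarrow> complex \<Rightarrow> complex \<Rightarrow> (int \<Rightarrow> complex) \<Rightarrow> complex" where
  "L5 am3 am1 ap1 ap3 u =
     - (9/8) * am1 * (1/24 * u (-2) - 9/8 * u (-1) + 9/8 * u 0 - 1/24 * u 1)
     + 1/24 * am3 * (- (11/12) * u (-2) + 17/24 * u (-1) + 3/8 * u 0 - 5/24 * u 1 + 1/24 * u 2)
     - 1/24 * ap3 * (- (1/24) * u (-2) + 5/24 * u (-1) - 3/8 * u 0 - 17/24 * u 1 + 11/12 * u 2)
     + 9/8 * ap1 * (1/24 * u (-1) - 9/8 * u 0 + 9/8 * u 1 - 1/24 * u 2)"

definition Lx :: "(real \<times> real \<Rightarrow> complex) \<Rightarrow> real \<Rightarrow> real \<Rightarrow> real \<Rightarrow> (int \<Rightarrow> complex) \<Rightarrow> complex" where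
  "Lx A x0 z0 h u =
     (let a = (\<lambda>j::int. A (x0 + real_of_int j / 2 * h, z0))
      in complex_of_real (h powi (-2)) * L5 (a (-3)) (a (-1)) (a 1) (a 3) u)"

definition Lz :: "(real \<times> real \<Rightarrow> complex) \<Rightarrow> real \<Rightarrow> real \<Rightarrow> real \<Rightarrow> real \<Rightarrow> (int \<Rightarrow> complex) \<Rightarrow> complex" where
  "Lz B x0 z0 \<gamma> h u =
     (let b = (\<lambda>l::int. B (x0, z0 + real_of_int l / 2 * \<gamma> * h))
      in complex_of_real ((\<gamma> * h) powi (-2)) * L5 (b (-3)) (b (-1)) (b 1) (b 3) u)"

definition phat :: "complex \<Rightarrow> complex \<Rightarrow> (real \<times> real \<Rightarrow> complex) \<Rightarrow> real \<Rightarrow> real \<Rightarrow> real \<Rightarrow> real \<Rightarrow> int \<Rightarrow> complex" where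
  "phat b1 b2 P x0 z0 \<gamma> h i =
     (let p = gv P x0 z0 \<gamma> h; s = \<bar>i\<bar> in
      if i = 0 then b1 * p 0 0
      else b1 * p i 0 + b2 / 2 * (p i s + p i (-s) - p 0 s - p 0 (-s)))"

definition ptilde :: "complex \<Rightarrow> complex \<Rightarrow> (real \<times> real \<Rightarrow> complex) \<Rightarrow> real \<Rightarrow> real \<Rightarrow> real \<Rightarrow> real \<Rightarrow> int \<Rightarrow> complex" where
  "ptilde b1 b2 P x0 z0 \<gamma> h i =
     (let p = gv P x0 z0 \<gamma> h; s = \<bar>i\<bar> in
      if i = 0 then b1 * p 0 0
      else b1 * p 0 i + b2 / 2 * (p s i + p (-s) i - p s 0 - p (-s) 0))"

definition Ltilde :: "complex \<Rightarrow> complex \<Rightarrow> (real \<times> real \<Rightarrow> complex) \<Rightarrow> (real \<times> real \<Rightarrow> complex)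
    \<Rightarrow> (real \<times> real \<Rightarrow> complex) \<Rightarrow> real \<Rightarrow> real \<Rightarrow> real \<Rightarrow> real \<Rightarrow> complex" where
  "Ltilde b1 b2 A B P x0 z0 \<gamma> h =
     Lx A x0 z0 h (phat b1 b2 P x0 z0 \<gamma> h) + Lz B x0 z0 \<gamma> h (ptilde b1 b2 P x0 z0 \<gamma> h)"

definition Itilde :: "complex \<Rightarrow> complex \<Rightarrow> complex \<Rightarrow> (real \<times> real \<Rightarrow> complex) \<Rightarrow> (real \<times> real \<Rightarrow> complex)
    \<Rightarrow> (real \<times> real \<Rightarrow> complex) \<Rightarrow> real \<Rightarrow> real \<Rightarrow> real \<Rightarrow> real \<Rightarrow> complex" where
  "Itilde d1 d2 d3 k C P x0 z0 \<gamma> h =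
     (let Q = gv (\<lambda>y. (k y)\<^sup>2 * C y * P y) x0 z0 \<gamma> h;
          I2 = 1/3 * (Q 1 0 + Q (-1) 0 + Q 0 1 + Q 0 (-1))
               - 1/12 * (Q 2 0 + Q (-2) 0 + Q 0 2 + Q 0 (-2));
          I3 = 1/3 * (Q (-1) (-1) + Q 1 1 + Q (-1) 1 + Q 1 (-1))
               - 1/12 * (Q (-2) (-2) + Q 2 2 + Q (-2) 2 + Q 2 (-2))
      in d1 * Q 0 0 + d2 * I2 + d3 * I3)"

definition helm_res :: "(real \<times> real \<Rightarrow> complex) \<Rightarrow> (real \<times> real \<Rightarrow> complex) \<Rightarrow> (real \<times> real \<Rightarrow> complex)
    \<Rightarrow> (real \<times> real \<Rightarrow> complex) \<Rightarrow> (real \<times> real \<Rightarrow> complex) \<Rightarrow> real \<Rightarrow> real \<Rightarrow> complex" where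
  "helm_res A B C k P x0 z0 =
     vector_derivative (\<lambda>t. A (t, z0) * vector_derivative (\<lambda>s. P (s, z0)) (at t)) (at x0)
   + vector_derivative (\<lambda>t. B (x0, t) * vector_derivative (\<lambda>s. P (x0, s)) (at t)) (at z0)
   + C (x0, z0) * (k (x0, z0))\<^sup>2 * P (x0, z0)"

end

theory Submission
  imports Defs "HOL-Computational_Algebra.Polynomial"
begin

text \<open>Every grid value is expanded in a Taylor polynomial along the ray through \<open>(x\<^sub>m, z\<^sub>n)\<close>,
  to order \<open>h\<^sup>6\<close> for the operator terms (which are divided by \<open>h\<^sup>2\<close>) and to order \<open>h\<^sup>4\<close> for the
  mass term; the remainders are controlled by bounds on the partial derivatives over a box
  around the point. On these polynomials the scheme is a polynomial in \<open>h\<close> whose coefficients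
  of low degree can be computed exactly: the \<open>x\<close>-part keeps only \<open>h\<^sup>2 (A p\<^sub>x)\<^sub>x\<close>, the
  \<open>z\<close>-part only \<open>h\<^sup>2 \<gamma>\<^sup>2 (B p\<^sub>z)\<^sub>z\<close>, and the mass weights reproduce \<open>C k\<^sup>2 p\<close> and annihilate
  degrees 1 to 3. The weights enter these coefficients only through \<open>b\<^sub>1 + b\<^sub>2\<close> and
  \<open>d\<^sub>1 + d\<^sub>2 + d\<^sub>3\<close>, hence consistency for all admissible weights.\<close>

section \<open>Orders of vanishing at \<open>0\<^sup>+\<close>\<close>

abbreviation O_pow :: "nat \<Rightarrow> (real \<Rightarrow> 'a::real_normed_field) set" where
  "O_pow N \<equiv> O[at_right 0](\<lambda>h. of_real h ^ N)"

lemma O_pow_mult: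
  assumes "f \<in> O_pow N" "g \<in> O_pow K"
  shows "(\<lambda>h. f h * g h) \<in> O_pow (N + K)"
  using landau_o.big.mult[OF assms] by (simp add: power_add)

lemma O_pow_mono:
  assumes "f \<in> O_pow N" "K \<le> N"
  shows "f \<in> O_pow K"
proof -
  have "eventually (\<lambda>h::real. norm (of_real h ^ N :: 'a) \<le> 1 * norm (of_real h ^ K :: 'a)) (at_right 0)"
    using eventually_at_right_real[OF zero_less_one]
  proof eventually_elim
    case (elim h)
    then have "h ^ N \<le> h ^ K" using assms(2) by (intro power_decreasing) auto
    then show ?case using elim by (simp add: norm_power)
  qed
  then have "(\<lambda>h. of_real h ^ N :: 'a) \<in> O_pow K" by (rule bigoI)
  then show ?thesis using assms(1) by (rule landau_o.big_trans[rotated])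
qed

lemma poly_in_O_pow_0: "(\<lambda>h. poly P (of_real h)) \<in> O_pow 0"
proof -
  have "((\<lambda>h::real. poly P (of_real h)) \<longlongrightarrow> poly P (of_real 0)) (at_right 0)"
    by (intro tendsto_intros)
  then show ?thesis by (intro bigoI_tendsto[where c = "poly P 0"]) auto
qed

lemma poly_in_O_pow:
  assumes "\<And>k. k < N \<Longrightarrow> coeff P k = 0"
  shows "(\<lambda>h. poly P (of_real h)) \<in> O_pow N"
  using assms
proof (induction N arbitrary: P)
  case 0
  then show ?case using poly_in_O_pow_0 by simp
next
  case (Suc N)
  obtain a Q where P: "P = pCons a Q" by (cases P) auto
  have "coeff P 0 = 0" using Suc.prems by simp
  then have "poly P x = x * poly Q x" for x by (simp add: P)
  moreover have "(\<lambda>h. poly Q (of_real h)) \<in> O_pow N"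
    using Suc.prems[of "Suc _"] P by (intro Suc.IH) auto
  ultimately show ?case using O_pow_mult[of "\<lambda>h. of_real h" 1] by simp
qed

lemma O_pow_divide_square:
  assumes "f \<in> O_pow (N + 2)"
  shows "(\<lambda>h. of_real (h powi -2) * f h) \<in> O_pow N"
proof -
  have "eventually (\<lambda>h::real. of_real (h powi -2) * of_real h ^ (N + 2) = (of_real h ^ N :: 'a)) (at_right 0)"
    using eventually_at_right_less[of 0]
  proof eventually_elim
    case (elim h)
    have "of_real (h powi -2) * of_real h ^ (N + 2) = (of_real (h powi -2 * h ^ 2) * of_real h ^ N :: 'a)"
      by (simp add: power_add power2_eq_square mult_ac)
    also have "h powi -2 * h ^ 2 = 1" using elim by (simp add: power_int_minus)
    finally show ?case by simp
  qed
  then have "O[at_right 0](\<lambda>h. of_real (h powi -2) * of_real h ^ (N + 2)) = (O_pow N :: (real \<Rightarrow> 'a) set)"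
    by (rule landau_o.big.cong)
  then show ?thesis using landau_o.big.mult_left[OF assms, of "\<lambda>h. of_real (h powi -2)"] by simp
qed

lemma O_pow_imp_norm_bigo:
  assumes "f \<in> O_pow N"
  shows "(\<lambda>h. norm (f h)) \<in> O[at_right 0](\<lambda>h. h ^ N)"
proof -
  have "(\<lambda>h. norm (f h)) \<in> O[at_right 0](\<lambda>h. norm (of_real h ^ N :: 'a))"
    using assms by (rule landau_o.big.norm_iff[THEN iffD2])
  also have "(\<lambda>h. norm (of_real h ^ N :: 'a)) = (\<lambda>h. \<bar>h ^ N\<bar>)"
    by (simp add: norm_power power_abs)
  finally show ?thesis by simp
qed

lemma O_pow_imp_tendsto_0:
  assumes "f \<in> O_pow N" "N > 0"
  shows "(f \<longlongrightarrow> 0) (at_right 0)"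
proof -
  obtain c where "eventually (\<lambda>h. norm (f h) \<le> c * norm (of_real h ^ N :: 'a)) (at_right 0)"
    using assms(1) by (elim landau_o.bigE)
  then have bound: "eventually (\<lambda>h. norm (f h) \<le> c * \<bar>h\<bar> ^ N) (at_right 0)"
    by (simp add: norm_power)
  have "((\<lambda>h::real. c * \<bar>h\<bar> ^ N) \<longlongrightarrow> c * \<bar>0\<bar> ^ N) (at_right 0)"
    by (intro tendsto_intros)
  then show ?thesis using assms(2) by (intro Lim_null_comparison[OF bound]) (simp add: power_0_left)
qed

lemma O_pow_cmult: "f \<in> O_pow N \<Longrightarrow> (\<lambda>h. c * f h) \<in> O_pow N"
  by simp

lemma O_pow_of_expansion:
  assumes "(\<lambda>h. f h - poly P (of_real h)) \<in> O_pow N"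
  shows "f \<in> O_pow 0"
proof -
  have "(\<lambda>h. (f h - poly P (of_real h)) + poly P (of_real h)) \<in> O_pow 0"
    by (rule sum_in_bigo(1)[OF O_pow_mono[OF assms] poly_in_O_pow_0]) simp
  then show ?thesis by simp
qed

section \<open>Taylor expansion along rays\<close>

definition partials_on :: "(real \<times> real) set \<Rightarrow> (real \<times> real \<Rightarrow> complex)
    \<Rightarrow> (nat \<Rightarrow> nat \<Rightarrow> real \<times> real \<Rightarrow> complex) \<Rightarrow> bool" where
  "partials_on U f D \<longleftrightarrow> (\<forall>y\<in>U. D 0 0 y = f y) \<and>
      (\<forall>i j. continuous_on U (D i j)) \<and>
      (\<forall>i j x z. (x, z) \<in> U \<longrightarrow>
         ((\<lambda>t. D i j (t, z)) has_vector_derivative D (Suc i) j (x, z)) (at x) \<and>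
         ((\<lambda>t. D i j (x, t)) has_vector_derivative D i (Suc j) (x, z)) (at z))"

lemma smooth2_on_iff_partials_on: "smooth2_on U f \<longleftrightarrow> (\<exists>D. partials_on U f D)"
  unfolding smooth2_on_def partials_on_def ..

lemma
  assumes "partials_on U f D"
  shows partials_on_eq: "y \<in> U \<Longrightarrow> D 0 0 y = f y"
    and partials_on_continuous: "continuous_on U (D i j)"
    and partials_on_deriv_x: "(x, z) \<in> U \<Longrightarrow>
          ((\<lambda>t. D i j (t, z)) has_vector_derivative D (Suc i) j (x, z)) (at x)"
    and partials_on_deriv_z: "(x, z) \<in> U \<Longrightarrow>
          ((\<lambda>t. D i j (x, t)) has_vector_derivative D i (Suc j) (x, z)) (at z)"
  using assms unfolding partials_on_def by blast+

lemma
  assumes D: "partials_on U f D" and U: "open U" "(x, z) \<in> U"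
  shows partials_on_deriv_x0: "((\<lambda>t. f (t, z)) has_vector_derivative D 1 0 (x, z)) (at x)"
    and partials_on_deriv_z0: "((\<lambda>t. f (x, t)) has_vector_derivative D 0 1 (x, z)) (at z)"
proof -
  have "open ((\<lambda>t. (t, z)) -` U)" "open ((\<lambda>t. (x, t)) -` U)"
    using U(1) by (auto intro!: continuous_open_vimage continuous_intros)
  show "((\<lambda>t. f (t, z)) has_vector_derivative D 1 0 (x, z)) (at x)"
  proof (rule has_vector_derivative_transform_within_open[OF _ \<open>open ((\<lambda>t. (t, z)) -` U)\<close>])
    show "((\<lambda>t. D 0 0 (t, z)) has_vector_derivative D 1 0 (x, z)) (at x)"
      using partials_on_deriv_x[OF D U(2), of 0 0] by simp
  qed (use U(2) partials_on_eq[OF D] in simp_all)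
  show "((\<lambda>t. f (x, t)) has_vector_derivative D 0 1 (x, z)) (at z)"
  proof (rule has_vector_derivative_transform_within_open[OF _ \<open>open ((\<lambda>t. (x, t)) -` U)\<close>])
    show "((\<lambda>t. D 0 0 (x, t)) has_vector_derivative D 0 1 (x, z)) (at z)"
      using partials_on_deriv_z[OF D U(2), of 0 0] by simp
  qed (use U(2) partials_on_eq[OF D] in simp_all)
qed

lemma complex_valued_Taylor:
  fixes g :: "nat \<Rightarrow> real \<Rightarrow> complex"
  assumes deriv: "\<And>i t. t \<in> closed_segment a b \<Longrightarrow> i \<le> n \<Longrightarrow> (g i has_vector_derivative g (Suc i) t) (at t)"
    and bound: "\<And>t. t \<in> closed_segment a b \<Longrightarrow> cmod (g (Suc n) t) \<le> B"
  shows "cmod (g 0 b - (\<Sum>i\<le>n. g i a * of_real ((b - a) ^ i / fact i)))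
           \<le> 2 * B * \<bar>b - a\<bar> ^ Suc n / fact n"
proof -
  let ?r = "g 0 b - (\<Sum>i\<le>n. g i a * of_real ((b - a) ^ i / fact i))"
  have S: "convex (closed_segment a b)" "a \<in> closed_segment a b" "b \<in> closed_segment a b"
    by (simp_all add: convex_closed_segment)
  have "norm (Re (g 0 b) - (\<Sum>i\<le>n. Re (g i a) * (b - a) ^ i / fact i)) \<le> B * norm (b - a) ^ Suc n / fact n"
  proof (rule field_Taylor[where f = "\<lambda>i t. Re (g i t)", OF S(1) _ _ S(2,3)])
    show "((\<lambda>t. Re (g i t)) has_field_derivative Re (g (Suc i) x)) (at x within closed_segment a b)"
      if "x \<in> closed_segment a b" "i \<le> n" for i x
      using deriv[OF that] by (rule has_field_derivative_Re[OF has_vector_derivative_at_within])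
    show "norm (Re (g (Suc n) x)) \<le> B" if "x \<in> closed_segment a b" for x
      using bound[OF that] abs_Re_le_cmod[of "g (Suc n) x"] by simp
  qed
  moreover have "norm (Im (g 0 b) - (\<Sum>i\<le>n. Im (g i a) * (b - a) ^ i / fact i)) \<le> B * norm (b - a) ^ Suc n / fact n"
  proof (rule field_Taylor[where f = "\<lambda>i t. Im (g i t)", OF S(1) _ _ S(2,3)])
    show "((\<lambda>t. Im (g i t)) has_field_derivative Im (g (Suc i) x)) (at x within closed_segment a b)"
      if "x \<in> closed_segment a b" "i \<le> n" for i x
      using deriv[OF that] by (rule has_field_derivative_Im[OF has_vector_derivative_at_within])
    show "norm (Im (g (Suc n) x)) \<le> B" if "x \<in> closed_segment a b" for x
      using bound[OF that] abs_Im_le_cmod[of "g (Suc n) x"] by simp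
  qed
  moreover have "Re (x * of_real r) = Re x * r" "Im (x * of_real r) = Im x * r" for x r
    by simp_all
  ultimately have part: "\<bar>Re ?r\<bar> \<le> B * \<bar>b - a\<bar> ^ Suc n / fact n" "\<bar>Im ?r\<bar> \<le> B * \<bar>b - a\<bar> ^ Suc n / fact n"
    by (simp_all only: real_norm_def minus_complex.sel Re_sum Im_sum times_divide_eq_right)
  have "cmod ?r \<le> \<bar>Re ?r\<bar> + \<bar>Im ?r\<bar>" by (rule cmod_le)
  also have "\<dots> \<le> B * \<bar>b - a\<bar> ^ Suc n / fact n + B * \<bar>b - a\<bar> ^ Suc n / fact n"
    using part by (rule add_mono)
  finally show ?thesis by simp
qed

lemma Taylor_remainder_in_O_pow:
  fixes g :: "real \<Rightarrow> nat \<Rightarrow> real \<Rightarrow> complex"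
  assumes "\<delta> > 0" and "N > 0"
    and deriv: "\<And>h i t. 0 < h \<Longrightarrow> h < \<delta> \<Longrightarrow> t \<in> closed_segment (a h) (a h + c * h) \<Longrightarrow> i < N \<Longrightarrow>
                  (g h i has_vector_derivative g h (Suc i) t) (at t)"
    and bound: "\<And>h t. 0 < h \<Longrightarrow> h < \<delta> \<Longrightarrow> t \<in> closed_segment (a h) (a h + c * h) \<Longrightarrow>
                  cmod (g h N t) \<le> B"
  shows "(\<lambda>h. g h 0 (a h + c * h) - (\<Sum>i<N. g h i (a h) * of_real ((c * h) ^ i / fact i))) \<in> O_pow N"
proof (rule bigoI)
  have N: "Suc (N - 1) = N" "{..N - 1} = {..<N}" using \<open>N > 0\<close> by auto
  show "eventually (\<lambda>h. norm (g h 0 (a h + c * h) - (\<Sum>i<N. g h i (a h) * of_real ((c * h) ^ i / fact i)))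
          \<le> 2 * B * \<bar>c\<bar> ^ N * norm (of_real h ^ N :: complex)) (at_right 0)"
    using eventually_at_right_real[OF \<open>\<delta> > 0\<close>]
  proof eventually_elim
    case (elim h)
    then have h: "0 < h" "h < \<delta>" by auto
    have "0 \<le> B" using bound[OF h, of "a h"] norm_ge_zero order_trans by blast
    have "cmod (g h 0 (a h + c * h) - (\<Sum>i\<le>N - 1. g h i (a h) * of_real ((a h + c * h - a h) ^ i / fact i)))
            \<le> 2 * B * \<bar>a h + c * h - a h\<bar> ^ Suc (N - 1) / fact (N - 1)"
    proof (rule complex_valued_Taylor)
      fix i t assume "t \<in> closed_segment (a h) (a h + c * h)" "i \<le> N - 1"
      then show "(g h i has_vector_derivative g h (Suc i) t) (at t)"
        using \<open>N > 0\<close> by (intro deriv[OF h]) auto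
    next
      fix t assume "t \<in> closed_segment (a h) (a h + c * h)"
      then show "cmod (g h (Suc (N - 1)) t) \<le> B" unfolding N(1) by (rule bound[OF h])
    qed
    also have "\<dots> = 2 * B * \<bar>c * h\<bar> ^ N / fact (N - 1)" unfolding N(1) by simp
    also have "\<dots> \<le> 2 * B * \<bar>c * h\<bar> ^ N"
      using \<open>0 \<le> B\<close> mult_left_mono[OF fact_ge_1, of "2 * B * \<bar>c * h\<bar> ^ N" "N - 1"]
      by (simp add: divide_le_eq)
    also have "\<dots> = 2 * B * \<bar>c\<bar> ^ N * norm (of_real h ^ N :: complex)"
      using h by (simp add: abs_mult power_mult_distrib norm_power)
    finally show ?case by (simp only: N(2) add_diff_cancel_left')
  qed
qed

definition taylor_coeff :: "(nat \<Rightarrow> nat \<Rightarrow> real \<times> real \<Rightarrow> complex) \<Rightarrow> real \<times> real \<Rightarrow> nat \<Rightarrow> nat \<Rightarrow> complex" where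
  "taylor_coeff D y i j = D i j y / of_real (fact i * fact j)"

text \<open>The truncated bivariate polynomial \<open>\<Sum>\<^sub>i\<^sub>+\<^sub>j\<^sub><\<^sub>N e i j X\<^sup>i Z\<^sup>j\<close> on the ray
  \<open>(X, Z) = (a h, b h)\<close>, as a polynomial in \<open>h\<close>.\<close>
definition ray_poly :: "nat \<Rightarrow> (nat \<Rightarrow> nat \<Rightarrow> 'a::comm_ring_1) \<Rightarrow> 'a \<Rightarrow> 'a \<Rightarrow> 'a poly" where
  "ray_poly N e a b = (\<Sum>k<N. monom (\<Sum>i\<le>k. e i (k - i) * a ^ i * b ^ (k - i)) k)"

lemma coeff_ray_poly:
  "coeff (ray_poly N e a b) k = (if k < N then \<Sum>i\<le>k. e i (k - i) * a ^ i * b ^ (k - i) else 0)"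
  unfolding ray_poly_def by (simp add: coeff_sum)

lemma poly_ray_poly_eq_triangle_sum:
  "poly (ray_poly N e a b) h = (\<Sum>i<N. \<Sum>j<N - i. e i j * (a * h) ^ i * (b * h) ^ j)"
proof -
  have "(\<Sum>i<N. \<Sum>j<N - i. e i j * (a * h) ^ i * (b * h) ^ j)
      = (\<Sum>(i, j)\<in>{(i, j). i + j < N}. e i j * (a * h) ^ i * (b * h) ^ j)"
    by (subst sum.Sigma) (auto intro!: sum.cong)
  also have "\<dots> = (\<Sum>k<N. \<Sum>i\<le>k. e i (k - i) * (a * h) ^ i * (b * h) ^ (k - i))"
    by (rule sum.triangle_reindex)
  also have "\<dots> = (\<Sum>k<N. (\<Sum>i\<le>k. e i (k - i) * a ^ i * b ^ (k - i)) * h ^ k)"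
    unfolding sum_distrib_right
  proof (intro sum.cong refl)
    fix k i :: nat assume "i \<in> {..k}"
    then have hk: "h ^ i * h ^ (k - i) = h ^ k" by (simp flip: power_add)
    show "e i (k - i) * (a * h) ^ i * (b * h) ^ (k - i) = e i (k - i) * a ^ i * b ^ (k - i) * h ^ k"
      by (simp add: power_mult_distrib mult_ac flip: hk)
  qed
  finally show ?thesis by (simp add: ray_poly_def poly_sum poly_monom)
qed

lemma partials_on_bounded_near:
  assumes "partials_on U f D" "open U" "(x0, z0) \<in> U"
  obtains \<rho> M where "\<rho> > 0"
    and "\<And>x z. \<bar>x - x0\<bar> \<le> \<rho> \<Longrightarrow> \<bar>z - z0\<bar> \<le> \<rho> \<Longrightarrow> (x, z) \<in> U"
    and "\<And>i j x z. \<bar>x - x0\<bar> \<le> \<rho> \<Longrightarrow> \<bar>z - z0\<bar> \<le> \<rho> \<Longrightarrow> cmod (D i j (x, z)) \<le> M i j"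
proof -
  obtain r where "r > 0" and r: "ball (x0, z0) r \<subseteq> U"
    using assms(2,3) open_contains_ball by blast
  define \<rho> where "\<rho> = r / 3"
  define K where "K = {x0 - \<rho>..x0 + \<rho>} \<times> {z0 - \<rho>..z0 + \<rho>}"
  have K: "(x, z) \<in> K \<longleftrightarrow> \<bar>x - x0\<bar> \<le> \<rho> \<and> \<bar>z - z0\<bar> \<le> \<rho>" for x z
    by (auto simp: K_def abs_le_iff)
  have "K \<subseteq> ball (x0, z0) r"
  proof
    fix y assume "y \<in> K"
    then obtain x z where y: "y = (x, z)" "\<bar>x - x0\<bar> \<le> \<rho>" "\<bar>z - z0\<bar> \<le> \<rho>"
      using K by (cases y) auto
    have "dist (x0, z0) (x, z) \<le> dist x0 x + dist z0 z"
      unfolding dist_Pair_Pair using sqrt_sum_squares_le_sum_abs[of "dist x0 x" "dist z0 z"] by simp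
    also have "\<dots> < r" using y \<open>r > 0\<close> by (simp add: dist_real_def abs_minus_commute \<rho>_def)
    finally show "y \<in> ball (x0, z0) r" using y by simp
  qed
  with r have KU: "K \<subseteq> U" by blast
  have "compact K" unfolding K_def by (intro compact_Times compact_Icc)
  then have "bounded (D i j ` K)" for i j
    using KU partials_on_continuous[OF assms(1)]
    by (intro compact_imp_bounded compact_continuous_image) (auto intro: continuous_on_subset)
  then have "\<forall>ij. \<exists>M. \<forall>y\<in>K. cmod (D (fst ij) (snd ij) y) \<le> M"
    by (auto simp: bounded_iff)
  then obtain M where M: "\<And>i j y. y \<in> K \<Longrightarrow> cmod (D i j y) \<le> M (i, j)"
    by (metis choice fst_conv snd_conv)
  show ?thesis
  proof (rule that[of \<rho> "\<lambda>i j. M (i, j)"])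
    show "\<rho> > 0" using \<open>r > 0\<close> by (simp add: \<rho>_def)
  qed (use KU K M in blast)+
qed

lemma abs_diff_le_of_closed_segment:
  fixes t a d :: real
  assumes "t \<in> closed_segment a (a + d)"
  shows "\<bar>t - a\<bar> \<le> \<bar>d\<bar>"
  using assms by (auto simp: closed_segment_eq_real_ivl split: if_splits)

lemma abs_mult_le_of_less_divide:
  fixes \<alpha> \<beta> h \<rho> :: real
  assumes "0 < h" "h < \<rho> / (\<bar>\<alpha>\<bar> + \<bar>\<beta>\<bar> + 1)"
  shows "\<bar>\<alpha> * h\<bar> \<le> \<rho>" "\<bar>\<beta> * h\<bar> \<le> \<rho>"
proof -
  have "\<bar>\<alpha>\<bar> * h + \<bar>\<beta>\<bar> * h + h \<le> \<rho>"
    using assms by (simp add: field_simps)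
  moreover have "0 \<le> \<bar>\<alpha>\<bar> * h" "0 \<le> \<bar>\<beta>\<bar> * h" "\<bar>\<alpha> * h\<bar> = \<bar>\<alpha>\<bar> * h" "\<bar>\<beta> * h\<bar> = \<bar>\<beta>\<bar> * h"
    using assms(1) by (simp_all add: abs_mult)
  ultimately show "\<bar>\<alpha> * h\<bar> \<le> \<rho>" "\<bar>\<beta> * h\<bar> \<le> \<rho>" using assms(1) by linarith+
qed

text \<open>Taylor in \<open>x\<close> along the horizontal line through \<open>(x\<^sub>0, z\<^sub>0 + \<beta> h)\<close>, then in \<open>z\<close> for each
  coefficient \<open>D i 0\<close>; all remainders are bounded on one box around the point.\<close>
lemma partials_on_iterated_Taylor:
  assumes D: "partials_on U f D" and U: "open U" "(x0, z0) \<in> U" and "N > 0"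
  shows "(\<lambda>h. f (x0 + \<alpha> * h, z0 + \<beta> * h)
           - (\<Sum>i<N. \<Sum>j<N - i. D i j (x0, z0) * of_real ((\<alpha> * h) ^ i / fact i) * of_real ((\<beta> * h) ^ j / fact j)))
         \<in> O_pow N"
proof -
  obtain \<rho> M where "\<rho> > 0"
    and inU: "\<And>x z. \<bar>x - x0\<bar> \<le> \<rho> \<Longrightarrow> \<bar>z - z0\<bar> \<le> \<rho> \<Longrightarrow> (x, z) \<in> U"
    and M: "\<And>i j x z. \<bar>x - x0\<bar> \<le> \<rho> \<Longrightarrow> \<bar>z - z0\<bar> \<le> \<rho> \<Longrightarrow> cmod (D i j (x, z)) \<le> M i j"
    using partials_on_bounded_near[OF assms(1-3)] by blast
  define \<delta> where "\<delta> = \<rho> / (\<bar>\<alpha>\<bar> + \<bar>\<beta>\<bar> + 1)"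
  have "\<delta> > 0" using \<open>\<rho> > 0\<close> by (simp add: \<delta>_def)
  have small: "\<bar>\<alpha> * h\<bar> \<le> \<rho>" "\<bar>\<beta> * h\<bar> \<le> \<rho>" if "0 < h" "h < \<delta>" for h
    using abs_mult_le_of_less_divide[OF that(1) that(2)[unfolded \<delta>_def]] by auto
  have box_x: "\<bar>t - x0\<bar> \<le> \<rho>" "\<bar>z0 + \<beta> * h - z0\<bar> \<le> \<rho>"
    if "0 < h" "h < \<delta>" "t \<in> closed_segment x0 (x0 + \<alpha> * h)" for h t
    using abs_diff_le_of_closed_segment[OF that(3)] small[OF that(1,2)] by simp_all
  have box_z: "\<bar>x0 - x0\<bar> \<le> \<rho>" "\<bar>t - z0\<bar> \<le> \<rho>"
    if "0 < h" "h < \<delta>" "t \<in> closed_segment z0 (z0 + \<beta> * h)" for h t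
    using abs_diff_le_of_closed_segment[OF that(3)] small[OF that(1,2)] \<open>\<rho> > 0\<close> by simp_all
  define w where "w c i h = (of_real ((c * h) ^ i / fact i) :: complex)" for c :: real and i h
  have expand_x: "(\<lambda>h. D 0 0 (x0 + \<alpha> * h, z0 + \<beta> * h)
                     - (\<Sum>i<N. D i 0 (x0, z0 + \<beta> * h) * w \<alpha> i h)) \<in> O_pow N"
    unfolding w_def
    by (rule Taylor_remainder_in_O_pow[OF \<open>\<delta> > 0\<close> \<open>N > 0\<close>, where B = "M N 0"])
       (use box_x in \<open>auto intro!: partials_on_deriv_x[OF D] inU M\<close>)
  have expand_z: "(\<lambda>h. D i 0 (x0, z0 + \<beta> * h) - (\<Sum>j<N - i. D i j (x0, z0) * w \<beta> j h)) \<in> O_pow (N - i)"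
    if "i < N" for i
    unfolding w_def
    by (rule Taylor_remainder_in_O_pow[OF \<open>\<delta> > 0\<close>, where B = "M i (N - i)"])
       (use that box_z in \<open>auto intro!: partials_on_deriv_z[OF D] inU M simp: Suc_diff_Suc\<close>)
  have "w \<alpha> i = (\<lambda>h. of_real (\<alpha> ^ i / fact i) * of_real h ^ i)" for i
    by (simp add: w_def fun_eq_iff power_mult_distrib)
  then have "(\<lambda>h. w \<alpha> i h * (D i 0 (x0, z0 + \<beta> * h) - (\<Sum>j<N - i. D i j (x0, z0) * w \<beta> j h)))
          \<in> O_pow N" if "i < N" for i
    using O_pow_mult[OF _ expand_z[OF that], of "w \<alpha> i" i] that by simp
  then have "(\<lambda>h. \<Sum>i<N. w \<alpha> i h * (D i 0 (x0, z0 + \<beta> * h) - (\<Sum>j<N - i. D i j (x0, z0) * w \<beta> j h)))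
          \<in> O_pow N"
    by (intro big_sum_in_bigo) simp
  with expand_x
  have "(\<lambda>h. (D 0 0 (x0 + \<alpha> * h, z0 + \<beta> * h) - (\<Sum>i<N. D i 0 (x0, z0 + \<beta> * h) * w \<alpha> i h))
          + (\<Sum>i<N. w \<alpha> i h * (D i 0 (x0, z0 + \<beta> * h) - (\<Sum>j<N - i. D i j (x0, z0) * w \<beta> j h))))
        \<in> O_pow N"
    by (rule sum_in_bigo(1))
  moreover have "eventually (\<lambda>h. D 0 0 (x0 + \<alpha> * h, z0 + \<beta> * h) = f (x0 + \<alpha> * h, z0 + \<beta> * h)) (at_right 0)"
    using eventually_at_right_real[OF \<open>\<delta> > 0\<close>]
    by eventually_elim (use small in \<open>auto intro!: partials_on_eq[OF D] inU\<close>)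
  ultimately show ?thesis
    by (elim landau_o.big.in_cong[THEN iffD1, rotated] eventually_mono)
       (simp add: w_def algebra_simps sum_subtractf sum_distrib_left)
qed

lemma partials_on_Taylor_expansion:
  assumes "partials_on U f D" "open U" "(x0, z0) \<in> U" "N > 0"
  shows "(\<lambda>h. f (x0 + \<alpha> * h, z0 + \<beta> * h)
           - poly (ray_poly N (taylor_coeff D (x0, z0)) (of_real \<alpha>) (of_real \<beta>)) (of_real h)) \<in> O_pow N"
proof -
  have "taylor_coeff D (x0, z0) i j * (of_real \<alpha> * of_real h) ^ i * (of_real \<beta> * of_real h) ^ j
          = D i j (x0, z0) * of_real ((\<alpha> * h) ^ i / fact i) * of_real ((\<beta> * h) ^ j / fact j)" for i j h
    by (simp add: taylor_coeff_def power_mult_distrib)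
  then show ?thesis
    using partials_on_iterated_Taylor[OF assms] by (simp add: poly_ray_poly_eq_triangle_sum)
qed

section \<open>The five-point operator\<close>

lemma L5_diff:
  "L5 a1 a2 a3 a4 u - L5 c1 c2 c3 c4 v
     = L5 (a1 - c1) (a2 - c2) (a3 - c3) (a4 - c4) u + L5 c1 c2 c3 c4 (\<lambda>i. u i - v i)"
  unfolding L5_def by (simp add: field_simps)

lemma L5_in_O_pow:
  assumes "a1 \<in> O_pow N" "a2 \<in> O_pow N" "a3 \<in> O_pow N" "a4 \<in> O_pow N"
    and "\<And>i. (\<lambda>h. u h i) \<in> O_pow K"
  shows "(\<lambda>h. L5 (a1 h) (a2 h) (a3 h) (a4 h) (u h)) \<in> O_pow (N + K)"
  unfolding L5_def by (intro sum_in_bigo O_pow_cmult O_pow_mult assms)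

definition L5_poly :: "complex poly \<Rightarrow> complex poly \<Rightarrow> complex poly \<Rightarrow> complex poly
    \<Rightarrow> (int \<Rightarrow> complex poly) \<Rightarrow> complex poly" where
  "L5_poly am3 am1 ap1 ap3 u =
     - smult (9/8) (am1 * (smult (1/24) (u (-2)) - smult (9/8) (u (-1)) + smult (9/8) (u 0) - smult (1/24) (u 1)))
     + smult (1/24) (am3 * (- smult (11/12) (u (-2)) + smult (17/24) (u (-1)) + smult (3/8) (u 0)
                            - smult (5/24) (u 1) + smult (1/24) (u 2)))
     - smult (1/24) (ap3 * (- smult (1/24) (u (-2)) + smult (5/24) (u (-1)) - smult (3/8) (u 0)
                            - smult (17/24) (u 1) + smult (11/12) (u 2)))
     + smult (9/8) (ap1 * (smult (1/24) (u (-1)) - smult (9/8) (u 0) + smult (9/8) (u 1) - smult (1/24) (u 2)))"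

lemma poly_L5_poly:
  "poly (L5_poly P1 P2 P3 P4 PU) x = L5 (poly P1 x) (poly P2 x) (poly P3 x) (poly P4 x) (\<lambda>i. poly (PU i) x)"
  unfolding L5_poly_def L5_def by (simp add: algebra_simps)

lemma L5_consistency:
  fixes a :: "int \<Rightarrow> real \<Rightarrow> complex" and u :: "real \<Rightarrow> int \<Rightarrow> complex"
  assumes a: "\<And>j. (\<lambda>h. a j h - poly (PA j) (of_real h)) \<in> O_pow 6"
    and u: "\<And>i. (\<lambda>h. u h i - poly (PU i) (of_real h)) \<in> O_pow 6"
    and coeff: "\<And>k. k < 6 \<Longrightarrow>
      coeff (L5_poly (PA (-3)) (PA (-1)) (PA 1) (PA 3) PU) k = (if k = 2 then T else 0)"
  shows "(\<lambda>h. of_real (h powi -2) * L5 (a (-3) h) (a (-1) h) (a 1 h) (a 3 h) (u h) - T) \<in> O_pow 4"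
proof -
  let ?A = "\<lambda>j h. poly (PA j) (of_real h)" and ?U = "\<lambda>h i. poly (PU i) (of_real h)"
  have "(\<lambda>h. L5 (a (-3) h - ?A (-3) h) (a (-1) h - ?A (-1) h) (a 1 h - ?A 1 h) (a 3 h - ?A 3 h) (u h))
          \<in> O_pow (6 + 0)"
    using a u[THEN O_pow_of_expansion] by (intro L5_in_O_pow)
  moreover have "(\<lambda>h. L5 (?A (-3) h) (?A (-1) h) (?A 1 h) (?A 3 h) (\<lambda>i. u h i - ?U h i)) \<in> O_pow (0 + 6)"
    using u by (intro L5_in_O_pow poly_in_O_pow_0)
  moreover have "(\<lambda>h. poly (L5_poly (PA (-3)) (PA (-1)) (PA 1) (PA 3) PU - monom T 2) (of_real h)) \<in> O_pow 6"
    using coeff by (intro poly_in_O_pow) (simp add: coeff_monom)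
  ultimately have "(\<lambda>h. L5 (a (-3) h) (a (-1) h) (a 1 h) (a 3 h) (u h) - T * of_real h ^ 2) \<in> O_pow (4 + 2)"
    by (auto dest: sum_in_bigo(1) simp: L5_diff[symmetric] poly_L5_poly poly_monom)
  then have "(\<lambda>h. of_real (h powi -2) * (L5 (a (-3) h) (a (-1) h) (a 1 h) (a 3 h) (u h) - T * of_real h ^ 2))
               \<in> O_pow 4"
    by (rule O_pow_divide_square)
  moreover have "eventually (\<lambda>h. of_real (h powi -2) * (L5 (a (-3) h) (a (-1) h) (a 1 h) (a 3 h) (u h) - T * of_real h ^ 2)
      = of_real (h powi -2) * L5 (a (-3) h) (a (-1) h) (a 1 h) (a 3 h) (u h) - T) (at_right 0)"
    using eventually_at_right_less[of 0]
    by eventually_elim (simp add: power_int_minus right_diff_distrib field_simps)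
  ultimately show ?thesis by (rule landau_o.big.in_cong[THEN iffD1, rotated])
qed

section \<open>The operators \<open>L\<^sub>x\<close> and \<open>L\<^sub>z\<close> on point-weighted values\<close>

lemma gv_expansion:
  assumes "partials_on U p D" "open U" "(x0, z0) \<in> U" "N > 0"
  shows "(\<lambda>h. gv p x0 z0 \<gamma> h m n
           - poly (ray_poly N (taylor_coeff D (x0, z0)) (of_int m) (of_int n * of_real \<gamma>)) (of_real h))
         \<in> O_pow N"
  using partials_on_Taylor_expansion[OF assms, of "real_of_int m" "real_of_int n * \<gamma>"]
  by (simp add: gv_def mult_ac)

definition phat_poly :: "complex \<Rightarrow> complex \<Rightarrow> (int \<Rightarrow> int \<Rightarrow> complex poly) \<Rightarrow> int \<Rightarrow> complex poly" where
  "phat_poly b1 b2 P i = (let s = \<bar>i\<bar> in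
      if i = 0 then smult b1 (P 0 0)
      else smult b1 (P i 0) + smult (b2 / 2) (P i s + P i (-s) - P 0 s - P 0 (-s)))"

definition ptilde_poly :: "complex \<Rightarrow> complex \<Rightarrow> (int \<Rightarrow> int \<Rightarrow> complex poly) \<Rightarrow> int \<Rightarrow> complex poly" where
  "ptilde_poly b1 b2 P i = (let s = \<bar>i\<bar> in
      if i = 0 then smult b1 (P 0 0)
      else smult b1 (P 0 i) + smult (b2 / 2) (P s i + P (-s) i - P s 0 - P (-s) 0))"

lemma
  assumes E: "\<And>m n. (\<lambda>h. gv p x0 z0 \<gamma> h m n - poly (P m n) (of_real h)) \<in> O_pow N"
  shows phat_expansion: "(\<lambda>h. phat b1 b2 p x0 z0 \<gamma> h i - poly (phat_poly b1 b2 P i) (of_real h)) \<in> O_pow N"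
    and ptilde_expansion: "(\<lambda>h. ptilde b1 b2 p x0 z0 \<gamma> h i - poly (ptilde_poly b1 b2 P i) (of_real h)) \<in> O_pow N"
proof -
  let ?E = "\<lambda>m n h. gv p x0 z0 \<gamma> h m n - poly (P m n) (of_real h)"
  define s where "s = \<bar>i\<bar>"
  have "(\<lambda>h. b1 * ?E 0 0 h) \<in> O_pow N"
    and "(\<lambda>h. b1 * ?E i 0 h + b2 / 2 * (?E i s h + ?E i (-s) h - ?E 0 s h - ?E 0 (-s) h)) \<in> O_pow N"
    and "(\<lambda>h. b1 * ?E 0 i h + b2 / 2 * (?E s i h + ?E (-s) i h - ?E s 0 h - ?E (-s) 0 h)) \<in> O_pow N"
    by (intro sum_in_bigo O_pow_cmult E)+
  then show "(\<lambda>h. phat b1 b2 p x0 z0 \<gamma> h i - poly (phat_poly b1 b2 P i) (of_real h)) \<in> O_pow N"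
    and "(\<lambda>h. ptilde b1 b2 p x0 z0 \<gamma> h i - poly (ptilde_poly b1 b2 P i) (of_real h)) \<in> O_pow N"
    by (simp_all add: phat_def phat_poly_def ptilde_def ptilde_poly_def Let_def s_def algebra_simps)
qed

text \<open>With \<open>a\<close>, \<open>c\<close> the scaled Taylor coefficients of \<open>A\<close>, \<open>p\<close>, the surviving coefficient is
  \<open>A\<^sub>x p\<^sub>x + A p\<^sub>x\<^sub>x = (A p\<^sub>x)\<^sub>x\<close>.\<close>
lemma coeff_Lx_poly:
  assumes "k < 6"
  shows "coeff (L5_poly (ray_poly 6 a (of_int (-3) / 2) 0) (ray_poly 6 a (of_int (-1) / 2) 0)
                  (ray_poly 6 a (of_int 1 / 2) 0) (ray_poly 6 a (of_int 3 / 2) 0)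
                  (phat_poly (1 - b2) b2 (\<lambda>m n. ray_poly 6 c (of_int m) (of_int n * g)))) k
       = (if k = 2 then a 1 0 * c 1 0 + 2 * a 0 0 * c 2 0 else 0)"
proof -
  have "k = 0 \<or> k = 1 \<or> k = 2 \<or> k = 3 \<or> k = 4 \<or> k = 5" using assms by auto
  then show ?thesis
    unfolding L5_poly_def phat_poly_def Let_def
    by (elim disjE; simp add: coeff_mult coeff_ray_poly eval_nat_numeral; simp add: field_simps)
qed

lemma coeff_Lz_poly:
  assumes "k < 6"
  shows "coeff (L5_poly (ray_poly 6 a 0 (of_int (-3) / 2 * g)) (ray_poly 6 a 0 (of_int (-1) / 2 * g))
                  (ray_poly 6 a 0 (of_int 1 / 2 * g)) (ray_poly 6 a 0 (of_int 3 / 2 * g))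
                  (ptilde_poly (1 - b2) b2 (\<lambda>m n. ray_poly 6 c (of_int m) (of_int n * g)))) k
       = (if k = 2 then g\<^sup>2 * (a 0 1 * c 0 1 + 2 * a 0 0 * c 0 2) else 0)"
proof -
  have "k = 0 \<or> k = 1 \<or> k = 2 \<or> k = 3 \<or> k = 4 \<or> k = 5" using assms by auto
  then show ?thesis
    unfolding L5_poly_def ptilde_poly_def Let_def
    by (elim disjE; simp add: coeff_mult coeff_ray_poly eval_nat_numeral; simp add: field_simps)
qed

lemma Lx_consistency:
  assumes A: "partials_on U A DA" and p: "partials_on U p Dp" and U: "open U" "(x0, z0) \<in> U"
    and b: "b1 + b2 = 1"
  shows "(\<lambda>h. Lx A x0 z0 h (phat b1 b2 p x0 z0 \<gamma> h)
           - (DA 1 0 (x0, z0) * Dp 1 0 (x0, z0) + DA 0 0 (x0, z0) * Dp 2 0 (x0, z0))) \<in> O_pow 4"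
proof -
  define cA cp where "cA = taylor_coeff DA (x0, z0)" and "cp = taylor_coeff Dp (x0, z0)"
  define a where "a j h = A (x0 + real_of_int j / 2 * h, z0)" for j h
  define u where "u h = phat b1 b2 p x0 z0 \<gamma> h" for h
  have b1: "b1 = 1 - b2" using b by (simp add: algebra_simps)
  have "(\<lambda>h. of_real (h powi -2) * L5 (a (-3) h) (a (-1) h) (a 1 h) (a 3 h) (u h)
           - (cA 1 0 * cp 1 0 + 2 * cA 0 0 * cp 2 0)) \<in> O_pow 4"
  proof (rule L5_consistency)
    show "(\<lambda>h. a j h - poly (ray_poly 6 cA (of_int j / 2) 0) (of_real h)) \<in> O_pow 6" for j
      using partials_on_Taylor_expansion[OF A U, of 6 "real_of_int j / 2" 0] by (simp add: a_def cA_def)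
    show "(\<lambda>h. u h i - poly (phat_poly b1 b2 (\<lambda>m n. ray_poly 6 cp (of_int m) (of_int n * of_real \<gamma>)) i)
            (of_real h)) \<in> O_pow 6" for i
      unfolding u_def cp_def by (intro phat_expansion gv_expansion[OF p U]) simp
    show "coeff (L5_poly (ray_poly 6 cA (of_int (-3) / 2) 0) (ray_poly 6 cA (of_int (-1) / 2) 0)
             (ray_poly 6 cA (of_int 1 / 2) 0) (ray_poly 6 cA (of_int 3 / 2) 0)
             (phat_poly b1 b2 (\<lambda>m n. ray_poly 6 cp (of_int m) (of_int n * of_real \<gamma>)))) k
          = (if k = 2 then cA 1 0 * cp 1 0 + 2 * cA 0 0 * cp 2 0 else 0)" if "k < 6" for k
      unfolding b1 by (rule coeff_Lx_poly[OF that])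
  qed
  then show ?thesis
    by (simp add: Lx_def Let_def a_def u_def cA_def cp_def taylor_coeff_def)
qed

lemma Lz_consistency:
  assumes B: "partials_on U B DB" and p: "partials_on U p Dp" and U: "open U" "(x0, z0) \<in> U"
    and b: "b1 + b2 = 1" and "\<gamma> > 0"
  shows "(\<lambda>h. Lz B x0 z0 \<gamma> h (ptilde b1 b2 p x0 z0 \<gamma> h)
           - (DB 0 1 (x0, z0) * Dp 0 1 (x0, z0) + DB 0 0 (x0, z0) * Dp 0 2 (x0, z0))) \<in> O_pow 4"
proof -
  define cB cp where "cB = taylor_coeff DB (x0, z0)" and "cp = taylor_coeff Dp (x0, z0)"
  define g where "g = (of_real \<gamma> :: complex)"
  define T where "T = cB 0 1 * cp 0 1 + 2 * cB 0 0 * cp 0 2"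
  define a where "a j h = B (x0, z0 + real_of_int j / 2 * \<gamma> * h)" for j h
  define u where "u h = ptilde b1 b2 p x0 z0 \<gamma> h" for h
  have b1: "b1 = 1 - b2" using b by (simp add: algebra_simps)
  have "(\<lambda>h. of_real (h powi -2) * L5 (a (-3) h) (a (-1) h) (a 1 h) (a 3 h) (u h) - g\<^sup>2 * T) \<in> O_pow 4"
  proof (rule L5_consistency)
    show "(\<lambda>h. a j h - poly (ray_poly 6 cB 0 (of_int j / 2 * g)) (of_real h)) \<in> O_pow 6" for j
      using partials_on_Taylor_expansion[OF B U, of 6 0 "real_of_int j / 2 * \<gamma>"]
      by (simp add: a_def cB_def g_def mult_ac)
    show "(\<lambda>h. u h i - poly (ptilde_poly b1 b2 (\<lambda>m n. ray_poly 6 cp (of_int m) (of_int n * g)) i)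
            (of_real h)) \<in> O_pow 6" for i
      unfolding u_def cp_def g_def by (intro ptilde_expansion gv_expansion[OF p U]) simp
    show "coeff (L5_poly (ray_poly 6 cB 0 (of_int (-3) / 2 * g)) (ray_poly 6 cB 0 (of_int (-1) / 2 * g))
             (ray_poly 6 cB 0 (of_int 1 / 2 * g)) (ray_poly 6 cB 0 (of_int 3 / 2 * g))
             (ptilde_poly b1 b2 (\<lambda>m n. ray_poly 6 cp (of_int m) (of_int n * g)))) k
          = (if k = 2 then g\<^sup>2 * T else 0)" if "k < 6" for k
      unfolding b1 T_def by (rule coeff_Lz_poly[OF that])
  qed
  then have "(\<lambda>h. of_real (\<gamma> powi -2)
               * (of_real (h powi -2) * L5 (a (-3) h) (a (-1) h) (a 1 h) (a 3 h) (u h) - g\<^sup>2 * T)) \<in> O_pow 4"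
    by (rule O_pow_cmult)
  moreover have "of_real (\<gamma> powi -2) * g\<^sup>2 = 1"
    using \<open>\<gamma> > 0\<close> by (simp add: g_def power_int_minus flip: of_real_power of_real_mult)
  ultimately show ?thesis
    by (simp add: Lz_def Let_def a_def u_def power_int_mult_distrib right_diff_distrib mult.assoc
        T_def cB_def cp_def taylor_coeff_def flip: mult.assoc)
qed

section \<open>The mass term\<close>

definition cauchy_product2 :: "(nat \<Rightarrow> nat \<Rightarrow> 'a::comm_ring_1) \<Rightarrow> (nat \<Rightarrow> nat \<Rightarrow> 'a) \<Rightarrow> nat \<Rightarrow> nat \<Rightarrow> 'a" where
  "cauchy_product2 e1 e2 i j = (\<Sum>a\<le>i. \<Sum>b\<le>j. e1 a b * e2 (i - a) (j - b))"

lemma coeff_ray_poly_mult: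
  assumes "k < 4"
  shows "coeff (ray_poly 4 e1 a b * ray_poly 4 e2 a b) k = coeff (ray_poly 4 (cauchy_product2 e1 e2) a b) k"
proof -
  have "k = 0 \<or> k = 1 \<or> k = 2 \<or> k = 3" using assms by auto
  then show ?thesis
    unfolding cauchy_product2_def
    by (elim disjE; simp add: coeff_mult coeff_ray_poly eval_nat_numeral; simp add: algebra_simps)
qed

lemma expansion_mult:
  assumes f: "(\<lambda>h. f h - poly P (of_real h)) \<in> O_pow N"
    and g: "(\<lambda>h. g h - poly Q (of_real h)) \<in> O_pow N"
  shows "(\<lambda>h. f h * g h - poly (P * Q) (of_real h)) \<in> O_pow N"
proof -
  have "(\<lambda>h. (f h - poly P (of_real h)) * g h + poly P (of_real h) * (g h - poly Q (of_real h)))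
          \<in> O_pow N"
    using O_pow_mult[OF f O_pow_of_expansion[OF g]] O_pow_mult[OF poly_in_O_pow_0 g]
    by (intro sum_in_bigo(1)) simp_all
  then show ?thesis by (simp add: algebra_simps)
qed

lemma ray_expansion_mult:
  assumes "(\<lambda>h. f h - poly (ray_poly 4 e1 a b) (of_real h)) \<in> O_pow 4"
    and "(\<lambda>h. g h - poly (ray_poly 4 e2 a b) (of_real h)) \<in> O_pow 4"
  shows "(\<lambda>h. f h * g h - poly (ray_poly 4 (cauchy_product2 e1 e2) a b) (of_real h)) \<in> O_pow 4"
proof -
  have "(\<lambda>h. (f h * g h - poly (ray_poly 4 e1 a b * ray_poly 4 e2 a b) (of_real h))
          + poly (ray_poly 4 e1 a b * ray_poly 4 e2 a b - ray_poly 4 (cauchy_product2 e1 e2) a b) (of_real h))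
        \<in> O_pow 4"
    using expansion_mult[OF assms] coeff_ray_poly_mult
    by (intro sum_in_bigo(1) poly_in_O_pow) simp_all
  then show ?thesis by simp
qed

definition Itilde_poly :: "complex \<Rightarrow> complex \<Rightarrow> complex \<Rightarrow> (int \<Rightarrow> int \<Rightarrow> complex poly) \<Rightarrow> complex poly" where
  "Itilde_poly d1 d2 d3 P =
     smult d1 (P 0 0)
   + smult d2 (smult (1/3) (P 1 0 + P (-1) 0 + P 0 1 + P 0 (-1))
               - smult (1/12) (P 2 0 + P (-2) 0 + P 0 2 + P 0 (-2)))
   + smult d3 (smult (1/3) (P (-1) (-1) + P 1 1 + P (-1) 1 + P 1 (-1))
               - smult (1/12) (P (-2) (-2) + P 2 2 + P (-2) 2 + P 2 (-2)))"

lemma Itilde_expansion: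
  assumes "\<And>m n. (\<lambda>h. gv (\<lambda>y. (k y)\<^sup>2 * C y * p y) x0 z0 \<gamma> h m n - poly (P m n) (of_real h)) \<in> O_pow N"
  shows "(\<lambda>h. Itilde d1 d2 d3 k C p x0 z0 \<gamma> h - poly (Itilde_poly d1 d2 d3 P) (of_real h)) \<in> O_pow N"
proof -
  let ?E = "\<lambda>m n h. gv (\<lambda>y. (k y)\<^sup>2 * C y * p y) x0 z0 \<gamma> h m n - poly (P m n) (of_real h)"
  have "(\<lambda>h. d1 * ?E 0 0 h
     + d2 * (1/3 * (?E 1 0 h + ?E (-1) 0 h + ?E 0 1 h + ?E 0 (-1) h)
             - 1/12 * (?E 2 0 h + ?E (-2) 0 h + ?E 0 2 h + ?E 0 (-2) h))
     + d3 * (1/3 * (?E (-1) (-1) h + ?E 1 1 h + ?E (-1) 1 h + ?E 1 (-1) h)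
             - 1/12 * (?E (-2) (-2) h + ?E 2 2 h + ?E (-2) 2 h + ?E 2 (-2) h))) \<in> O_pow N"
    by (intro sum_in_bigo O_pow_cmult assms)
  then show ?thesis by (simp add: Itilde_def Itilde_poly_def Let_def algebra_simps)
qed

lemma coeff_Itilde_poly:
  assumes "k < 4"
  shows "coeff (Itilde_poly (1 - d2 - d3) d2 d3 (\<lambda>m n. ray_poly 4 e (of_int m) (of_int n * g))) k
       = (if k = 0 then e 0 0 else 0)"
proof -
  have "k = 0 \<or> k = 1 \<or> k = 2 \<or> k = 3" using assms by auto
  then show ?thesis
    unfolding Itilde_poly_def
    by (elim disjE; simp add: coeff_ray_poly eval_nat_numeral; simp add: field_simps)
qed

lemma Itilde_consistency:
  assumes k: "partials_on U k Dk" and C: "partials_on U C DC" and p: "partials_on U p Dp"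
    and U: "open U" "(x0, z0) \<in> U" and d: "d1 + d2 + d3 = 1"
  shows "(\<lambda>h. Itilde d1 d2 d3 k C p x0 z0 \<gamma> h - C (x0, z0) * (k (x0, z0))\<^sup>2 * p (x0, z0)) \<in> O_pow 4"
proof -
  define ck cC cp
    where "ck = taylor_coeff Dk (x0, z0)" and "cC = taylor_coeff DC (x0, z0)" and "cp = taylor_coeff Dp (x0, z0)"
  define e where "e = cauchy_product2 (cauchy_product2 (cauchy_product2 ck ck) cC) cp"
  let ?P = "\<lambda>m n. ray_poly 4 e (of_int m) (of_int n * of_real \<gamma>)"
  have "(\<lambda>h. k (x0 + \<alpha> * h, z0 + \<beta> * h) * k (x0 + \<alpha> * h, z0 + \<beta> * h) * C (x0 + \<alpha> * h, z0 + \<beta> * h)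
            * p (x0 + \<alpha> * h, z0 + \<beta> * h) - poly (ray_poly 4 e (of_real \<alpha>) (of_real \<beta>)) (of_real h))
        \<in> O_pow 4" for \<alpha> \<beta>
    unfolding e_def ck_def cC_def cp_def
    by (intro ray_expansion_mult partials_on_Taylor_expansion[OF k U] partials_on_Taylor_expansion[OF C U]
        partials_on_Taylor_expansion[OF p U]) simp_all
  from this[of "real_of_int m" "real_of_int n * \<gamma>" for m n]
  have "(\<lambda>h. gv (\<lambda>y. (k y)\<^sup>2 * C y * p y) x0 z0 \<gamma> h m n - poly (?P m n) (of_real h)) \<in> O_pow 4" for m n
    by (simp add: gv_def power2_eq_square mult_ac)
  then have "(\<lambda>h. Itilde d1 d2 d3 k C p x0 z0 \<gamma> h - poly (Itilde_poly d1 d2 d3 ?P) (of_real h)) \<in> O_pow 4"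
    by (rule Itilde_expansion)
  moreover have "(\<lambda>h. poly (Itilde_poly d1 d2 d3 ?P - [:e 0 0:]) (of_real h)) \<in> O_pow 4"
  proof (rule poly_in_O_pow)
    have "d1 = 1 - d2 - d3" using d by (simp add: algebra_simps)
    then show "coeff (Itilde_poly d1 d2 d3 ?P - [:e 0 0:]) j = 0" if "j < 4" for j
      using coeff_Itilde_poly[OF that] by (cases j) auto
  qed
  moreover have "e 0 0 = C (x0, z0) * (k (x0, z0))\<^sup>2 * p (x0, z0)"
    using partials_on_eq[OF k U(2)] partials_on_eq[OF C U(2)] partials_on_eq[OF p U(2)]
    by (simp add: e_def ck_def cC_def cp_def cauchy_product2_def taylor_coeff_def power2_eq_square)
  ultimately show ?thesis by (auto dest: sum_in_bigo(1))
qed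

section \<open>The PDE residual\<close>

lemma vector_derivative_flux:
  fixes a g :: "real \<Rightarrow> 'a::real_normed_field"
  assumes "open S" "t0 \<in> S"
    and g: "\<And>t. t \<in> S \<Longrightarrow> (g has_vector_derivative g' t) (at t)"
    and g': "(g' has_vector_derivative g'') (at t0)" and a: "(a has_vector_derivative a') (at t0)"
  shows "vector_derivative (\<lambda>t. a t * vector_derivative g (at t)) (at t0) = a' * g' t0 + a t0 * g''"
proof -
  have "((\<lambda>t. a t * g' t) has_vector_derivative a t0 * g'' + a' * g' t0) (at t0)"
    using a g' by (rule has_vector_derivative_mult)
  then have "((\<lambda>t. a t * vector_derivative g (at t)) has_vector_derivative a t0 * g'' + a' * g' t0) (at t0)"
  proof (rule has_vector_derivative_transform_within_open[OF _ assms(1,2)])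
    show "a t * g' t = a t * vector_derivative g (at t)" if "t \<in> S" for t
      using vector_derivative_at[OF g[OF that]] by simp
  qed
  then show ?thesis by (simp add: vector_derivative_at algebra_simps)
qed

lemma helm_res_eq_partials:
  assumes A: "partials_on U A DA" and B: "partials_on U B DB" and p: "partials_on U p Dp"
    and U: "open U" "(x0, z0) \<in> U"
  shows "helm_res A B C k p x0 z0 =
      (DA 1 0 (x0, z0) * Dp 1 0 (x0, z0) + DA 0 0 (x0, z0) * Dp 2 0 (x0, z0))
    + (DB 0 1 (x0, z0) * Dp 0 1 (x0, z0) + DB 0 0 (x0, z0) * Dp 0 2 (x0, z0))
    + C (x0, z0) * (k (x0, z0))\<^sup>2 * p (x0, z0)"
proof -
  have "vector_derivative (\<lambda>t. A (t, z0) * vector_derivative (\<lambda>s. p (s, z0)) (at t)) (at x0)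
          = DA 1 0 (x0, z0) * Dp 1 0 (x0, z0) + A (x0, z0) * Dp 2 0 (x0, z0)"
  proof (rule vector_derivative_flux[where S = "(\<lambda>t. (t, z0)) -` U" and g' = "\<lambda>t. Dp 1 0 (t, z0)"])
    show "open ((\<lambda>t. (t, z0)) -` U)"
      using U(1) by (auto intro!: continuous_open_vimage continuous_intros)
    show "((\<lambda>s. p (s, z0)) has_vector_derivative Dp 1 0 (t, z0)) (at t)" if "t \<in> (\<lambda>t. (t, z0)) -` U" for t
      using that by (intro partials_on_deriv_x0[OF p U(1)]) simp
    show "((\<lambda>t. Dp 1 0 (t, z0)) has_vector_derivative Dp 2 0 (x0, z0)) (at x0)"
      using partials_on_deriv_x[OF p U(2), of 1 0] by (simp add: numeral_2_eq_2)
  qed (use U(2) partials_on_deriv_x0[OF A U] in simp_all)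
  moreover have "vector_derivative (\<lambda>t. B (x0, t) * vector_derivative (\<lambda>s. p (x0, s)) (at t)) (at z0)
          = DB 0 1 (x0, z0) * Dp 0 1 (x0, z0) + B (x0, z0) * Dp 0 2 (x0, z0)"
  proof (rule vector_derivative_flux[where S = "(\<lambda>t. (x0, t)) -` U" and g' = "\<lambda>t. Dp 0 1 (x0, t)"])
    show "open ((\<lambda>t. (x0, t)) -` U)"
      using U(1) by (auto intro!: continuous_open_vimage continuous_intros)
    show "((\<lambda>s. p (x0, s)) has_vector_derivative Dp 0 1 (x0, t)) (at t)" if "t \<in> (\<lambda>t. (x0, t)) -` U" for t
      using that by (intro partials_on_deriv_z0[OF p U(1)]) simp
    show "((\<lambda>t. Dp 0 1 (x0, t)) has_vector_derivative Dp 0 2 (x0, z0)) (at z0)"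
      using partials_on_deriv_z[OF p U(2), of 0 1] by (simp add: numeral_2_eq_2)
  qed (use U(2) partials_on_deriv_z0[OF B U] in simp_all)
  ultimately show ?thesis
    using partials_on_eq[OF A U(2)] partials_on_eq[OF B U(2)] by (simp add: helm_res_def)
qed

theorem proposition1:
  fixes A B C k p :: "real \<times> real \<Rightarrow> complex"
    and \<gamma> x0 z0 :: real and b1 b2 d1 d2 d3 :: complex and U :: "(real \<times> real) set"
  assumes "\<gamma> > 0" and "b1 + b2 = 1" and "d1 + d2 + d3 = 1"
    and "open U" and "(x0, z0) \<in> U"
    and "smooth2_on U A" and "smooth2_on U B" and "smooth2_on U C"
    and "smooth2_on U k" and "smooth2_on U p"
  shows "(\<lambda>h. norm (Ltilde b1 b2 A B p x0 z0 \<gamma> h + Itilde d1 d2 d3 k C p x0 z0 \<gamma> h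
                     - helm_res A B C k p x0 z0)) \<in> O[at_right 0](\<lambda>h. h ^ 4)
     \<and> ((\<lambda>h. Ltilde b1 b2 A B p x0 z0 \<gamma> h + Itilde d1 d2 d3 k C p x0 z0 \<gamma> h
                     - helm_res A B C k p x0 z0) \<longlongrightarrow> 0) (at_right 0)"
proof -
  note U = assms(4,5)
  obtain DA DB DC Dk Dp where A: "partials_on U A DA" and B: "partials_on U B DB"
    and C: "partials_on U C DC" and k: "partials_on U k Dk" and p: "partials_on U p Dp"
    using assms(6-10) unfolding smooth2_on_iff_partials_on by blast
  have "(\<lambda>h. (Lx A x0 z0 h (phat b1 b2 p x0 z0 \<gamma> h)
               - (DA 1 0 (x0, z0) * Dp 1 0 (x0, z0) + DA 0 0 (x0, z0) * Dp 2 0 (x0, z0)))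
          + (Lz B x0 z0 \<gamma> h (ptilde b1 b2 p x0 z0 \<gamma> h)
               - (DB 0 1 (x0, z0) * Dp 0 1 (x0, z0) + DB 0 0 (x0, z0) * Dp 0 2 (x0, z0)))
          + (Itilde d1 d2 d3 k C p x0 z0 \<gamma> h - C (x0, z0) * (k (x0, z0))\<^sup>2 * p (x0, z0)))
        \<in> O_pow 4"
    by (intro sum_in_bigo(1) Lx_consistency[OF A p U assms(2)] Lz_consistency[OF B p U assms(2,1)]
        Itilde_consistency[OF k C p U assms(3)])
  then have "(\<lambda>h. Ltilde b1 b2 A B p x0 z0 \<gamma> h + Itilde d1 d2 d3 k C p x0 z0 \<gamma> h
                - helm_res A B C k p x0 z0) \<in> O_pow 4"
    by (simp add: Ltilde_def helm_res_eq_partials[OF A B p U] algebra_simps)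
  then show ?thesis by (auto intro: O_pow_imp_norm_bigo O_pow_imp_tendsto_0)
qed

end
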